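(* The $(1+1)$-elitist unary unbiased black-box complexity of the $\mathrm{DLB}$ problem is $\Omega(n^3)$; that is, there is a constant $c>0$ such that for all (sufficiently large) even $n$, every $(1+1)$-elitist unary unbiased black-box algorithm has expected runtime at least $c n^3$ on $\mathrm{DLB}:\{0,1\}^n\to\mathbb{R}$.
   Context: Let $n$ be an even positive integer. For $x\in\{0,1\}^n$ consider the blocks $(x_{2\ell+1},x_{2\ell+2})$, $\ell=0,\dots,\frac n2-1$. If $x\neq(1,\dots,1)$, let $m$ be the smallest $\ell$ with $x_{2\ell+1}\neq 1$ or $x_{2\ell+2}\neq 1$, and define $\mathrm{DLB}(x)=2m+1$ if $x_{2m+1}+x_{2m+2}=0$ and $\mathrm{DLB}(x)=2m$ if $x_{2m+1}+x_{2m+2}=1$; set $\mathrm{DLB}(1,\dots,1)=n$. The $\mathrm{DLB}$ problem is to maximize $\mathrm{DLB}$. A unary unbiased variation operator $V$ assigns to each $x\in\{0,1\}^n$ a probability distribution $V(x)$ on $\{0,1\}^n$ such that for all $x,y,z\in\{0,1\}^n$, $\Pr[y=V(x)]=\Pr[y\oplus z=V(x\oplus z)]$, and for all permutations $\sigma$ of $[1..n]$, $\Pr[y=V(x)]=\Pr[\sigma(y)=V(\sigma(x))]$, where $\sigma(x)=(x_{\sigma(1)},\dots,x_{\sigma(n)})$. A $(1+1)$-elitist unary unbiased black-box algorithm starts with a search point $x$ chosen uniformly at random from $\{0,1\}^n$; in each iteration it chooses a unary unbiased variation operator $V$ (this choice may depend only on the fitness values of the search points generated so far), samples $q\sim V(x)$,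 evaluates it, and replaces $x$ by a best individual among $\{x,q\}$ (ties broken arbitrarily). Every generated search point is evaluated immediately. The runtime is the number of fitness evaluations until (and including) the first evaluation of an optimal solution. The $(1+1)$-elitist black-box complexity of $\mathrm{DLB}$ is the infimum, over all such algorithms, of the expected runtime on $\mathrm{DLB}$. *)

theory Defs
  imports "HOL-Probability.Probability"
begin

text \<open>Bit strings of length n are represented as bool lists of length n
  (position i of the paper, 1-based, is list index i-1).\<close>

definition bitstrings :: "nat \<Rightarrow> bool list set" where
  "bitstrings n = {xs. length xs = n}"

definition xor_bits :: "bool list \<Rightarrow> bool list \<Rightarrow> bool list" where
  "xor_bits x z = map2 (\<noteq>) x z"

definition perm_bits :: "nat \<Rightarrow> (nat \<Rightarrow> nat) \<Rightarrow> bool list \<Rightarrow> bool list" where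
  "perm_bits n \<sigma> x = map (\<lambda>i. x ! \<sigma> i) [0..<n]"

definition dlb :: "nat \<Rightarrow> bool list \<Rightarrow> real" where
  "dlb n x =
    (if \<forall>l < n div 2. x ! (2*l) \<and> x ! (2*l+1) then real n
     else let m = (LEAST l. \<not> (x ! (2*l) \<and> x ! (2*l+1))) in
       if \<not> x ! (2*m) \<and> \<not> x ! (2*m+1) then real (2*m+1) else real (2*m))"

definition unary_unbiased :: "nat \<Rightarrow> (bool list \<Rightarrow> bool list pmf) \<Rightarrow> bool" where
  "unary_unbiased n V \<longleftrightarrow>
     (\<forall>x \<in> bitstrings n. set_pmf (V x) \<subseteq> bitstrings n) \<and>
     (\<forall>x \<in> bitstrings n. \<forall>y \<in> bitstrings n. \<forall>z \<in> bitstrings n.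
        pmf (V x) y = pmf (V (xor_bits x z)) (xor_bits y z)) \<and>
     (\<forall>x \<in> bitstrings n. \<forall>y \<in> bitstrings n. \<forall>\<sigma>. \<sigma> permutes {0..<n} \<longrightarrow>
        pmf (V x) y = pmf (V (perm_bits n \<sigma> x)) (perm_bits n \<sigma> y))"

definition is_opt :: "nat \<Rightarrow> (bool list \<Rightarrow> real) \<Rightarrow> bool list \<Rightarrow> bool" where
  "is_opt n f q \<longleftrightarrow> (\<forall>y \<in> bitstrings n. f y \<le> f q)"

text \<open>State: (fitness history, current search point, optimum already evaluated).
  The algorithm is given by Op (operator chosen from the fitness history) and
  Tie (possibly randomised tie-breaking rule: True = accept offspring), both
  depending only on the fitness values seen so far.\<close>
type_synonym bb_state = "real list \<times> bool list \<times> bool"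

definition bb_init :: "nat \<Rightarrow> (bool list \<Rightarrow> real) \<Rightarrow> bb_state pmf" where
  "bb_init n f = map_pmf (\<lambda>x. ([f x], x, is_opt n f x)) (pmf_of_set (bitstrings n))"

definition bb_step :: "nat \<Rightarrow> (bool list \<Rightarrow> real) \<Rightarrow>
    (real list \<Rightarrow> bool list \<Rightarrow> bool list pmf) \<Rightarrow> (real list \<Rightarrow> bool pmf) \<Rightarrow>
    bb_state \<Rightarrow> bb_state pmf" where
  "bb_step n f Op Tie s = (case s of (h, x, d) \<Rightarrow>
     if d then return_pmf s else
     bind_pmf (Op h x) (\<lambda>q.
       let h' = h @ [f q] in
       bind_pmf (if f q > f x then return_pmf True
                 else if f q < f x then return_pmf False else Tie h')
         (\<lambda>keep. return_pmf (h', if keep then q else x, is_opt n f q))))"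

primrec bb_state :: "nat \<Rightarrow> (bool list \<Rightarrow> real) \<Rightarrow>
    (real list \<Rightarrow> bool list \<Rightarrow> bool list pmf) \<Rightarrow> (real list \<Rightarrow> bool pmf) \<Rightarrow>
    nat \<Rightarrow> bb_state pmf" where
  "bb_state n f Op Tie 0 = bb_init n f"
| "bb_state n f Op Tie (Suc t) = bind_pmf (bb_state n f Op Tie t) (bb_step n f Op Tie)"

text \<open>Expected runtime (number of evaluations, including the first optimal one):
  E[T] = sum_{k>=0} P(T > k) = 1 + sum_{t>=0} P(no optimum evaluated after t iterations).\<close>
definition expected_runtime :: "nat \<Rightarrow> (bool list \<Rightarrow> real) \<Rightarrow>
    (real list \<Rightarrow> bool list \<Rightarrow> bool list pmf) \<Rightarrow> (real list \<Rightarrow> bool pmf) \<Rightarrow> ennreal" where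
  "expected_runtime n f Op Tie =
     1 + (\<Sum>t. ennreal (measure_pmf.prob (bb_state n f Op Tie t) {s. \<not> snd (snd s)}))"

end

(*
  Call the first block of a search point that is not 11 its critical block.  For M about n/4,
  the potential of a search point counts the blocks j >= M from the critical block on that are
  not 11, the critical block counting twice if it is a trap 00.  It is about 3/4 (n/2 - M) in
  expectation for a uniform start and vanishes at the optimum, and one step of an elitist
  unbiased algorithm decreases it by at most 2/M^2 in expectation:
  - an unbiased operator leaves a trap at block c >= M with probability at most 1/c^2, since
    relocating the two flipped bits inside the first 2c positions gives c^2 disjoint events of
    the same probability;
  - it leaves a mixed critical block exactly as often as it turns the block into a trap, by
    swapping the two bits of the block;
  - the bits beyond the critical block are invisible to the comparisons of the algorithm, so
    flipping them is a symmetry of the whole run, and averaging over the four flips of a block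
    above the critical block shows that its expected contribution does not decrease.
  Hence the expected runtime is at least of order M^2 (n/2 - M), i.e. of order n^3.
*)

theory Submission
  imports Defs
begin

section \<open>Probability mass functions\<close>

lemma measure_pmf_eq_if_Int_eq:
  assumes "set_pmf M \<subseteq> C" "X \<inter> C = Y \<inter> C"
  shows "measure M X = measure M Y"
proof -
  have "X \<inter> set_pmf M = Y \<inter> set_pmf M" using assms by blast
  then show ?thesis by (metis measure_Int_set_pmf)
qed

lemma pmf_eq_map_pmf_if_bij_betw:
  assumes f: "bij_betw f A A" and M: "set_pmf M \<subseteq> A" and N: "set_pmf N \<subseteq> A"
    and eq: "\<And>y. y \<in> A \<Longrightarrow> pmf N (f y) = pmf M y"
  shows "N = map_pmf f M"
proof (rule pmf_eqI)
  fix y'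
  show "pmf N y' = pmf (map_pmf f M) y'"
  proof (cases "y' \<in> A")
    case True
    then obtain y where y: "y \<in> A" "y' = f y" using f by (auto simp: bij_betw_def)
    have inj: "inj_on f (set_pmf M)" using f M by (auto simp: bij_betw_def intro: inj_on_subset)
    show ?thesis
    proof (cases "y \<in> set_pmf M")
      case True
      then show ?thesis using y eq pmf_map_inj[OF inj] by simp
    next
      case False
      then have "y' \<notin> f ` set_pmf M" using y M f by (auto simp: bij_betw_def dest: inj_onD)
      then show ?thesis using y eq False by (simp add: pmf_map_outside pmf_eq_0_set_pmf)
    qed
  next
    case False
    then have "y' \<notin> set_pmf N" "y' \<notin> f ` set_pmf M" using M N f by (auto simp: bij_betw_def)
    then show ?thesis by (simp add: pmf_map_outside pmf_eq_0_set_pmf)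
  qed
qed

lemma map_pmf_involution_eq_iff:
  assumes "\<And>s. g (g s) = s"
  shows "map_pmf g M = M \<longleftrightarrow> (\<forall>s. pmf M (g s) = pmf M s)"
proof -
  have inj: "inj g" by (metis assms injI)
  have "pmf (map_pmf g M) s = pmf M (g s)" for s
    using pmf_map_inj'[OF inj, of M "g s"] by (simp add: assms)
  then show ?thesis by (auto intro: pmf_eqI)
qed

lemma integral_map_pmf_invariant:
  fixes F :: "'a \<Rightarrow> real"
  assumes "map_pmf g M = M"
  shows "(\<integral>s. F (g s) \<partial>M) = (\<integral>s. F s \<partial>M)"
  by (subst (2) assms[symmetric]) simp

lemma pmf_map_pmf_eq_if_preimage_eq:
  assumes "\<And>k. k \<in> set_pmf M \<Longrightarrow> f k = a \<longleftrightarrow> g k = b"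
  shows "pmf (map_pmf f M) a = pmf (map_pmf g M) b"
  unfolding pmf_map using assms by (intro measure_pmf_eq_if_Int_eq[OF order.refl]) auto

lemma card_mult_measure_le_1:
  assumes "finite I" "\<And>i. i \<in> I \<Longrightarrow> map_pmf (f i) M = M" "disjoint_family_on (\<lambda>i. f i -` G) I"
  shows "real (card I) * measure M G \<le> 1"
proof -
  have "real (card I) * measure M G = (\<Sum>i\<in>I. measure (map_pmf (f i) M) G)"
    using assms(2) by simp
  also have "\<dots> = measure M (\<Union>i\<in>I. f i -` G)"
    using assms(1,3) by (simp add: measure_finite_Union)
  also have "\<dots> \<le> 1" by simp
  finally show ?thesis .
qed

lemma integral_bool_pmf:
  fixes f :: "bool \<Rightarrow> real" and \<mu> :: "bool pmf"
  shows "(\<integral>k. f k \<partial>\<mu>) = pmf \<mu> True * f True + (1 - pmf \<mu> True) * f False"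
  by (simp add: integral_measure_pmf[of UNIV] UNIV_bool pmf_False_conv_True)

lemma integral_bind_pmf_bounded:
  fixes f :: "'b \<Rightarrow> real"
  assumes "\<And>y. \<bar>f y\<bar> \<le> B"
  shows "(\<integral>y. f y \<partial>bind_pmf M N) = (\<integral>x. \<integral>y. f y \<partial>N x \<partial>M)"
  using measurable_measure_pmf[of N] unfolding measure_pmf_bind
  by (intro integral_bind[where K="count_space UNIV" and B=B and B'=1])
     (auto simp: assms measure_pmf.emeasure_space_1)

section \<open>The critical block of DLB\<close>

definition block_ok :: "bool list \<Rightarrow> nat \<Rightarrow> bool" where
  "block_ok x l \<longleftrightarrow> x!(2*l) \<and> x!(2*l+1)"

definition block_trap :: "bool list \<Rightarrow> nat \<Rightarrow> bool" where
  "block_trap x l \<longleftrightarrow> \<not> x!(2*l) \<and> \<not> x!(2*l+1)"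

text \<open>The index \<open>m\<close> of the paper, extended by \<open>n div 2\<close> for the all-ones string.\<close>

definition crit_block :: "nat \<Rightarrow> bool list \<Rightarrow> nat" where
  "crit_block n x = (if \<forall>l<n div 2. block_ok x l then n div 2 else LEAST l. \<not> block_ok x l)"

lemma crit_block_le: "crit_block n x \<le> n div 2"
  unfolding crit_block_def by (auto intro: Least_le[THEN order_trans] less_imp_le)

lemma block_ok_below_crit_block: "l < crit_block n x \<Longrightarrow> block_ok x l"
  unfolding crit_block_def by (auto split: if_splits dest: not_less_Least)

lemma not_block_ok_crit_block: "crit_block n x < n div 2 \<Longrightarrow> \<not> block_ok x (crit_block n x)"
  unfolding crit_block_def using LeastI[of "\<lambda>l. \<not> block_ok x l"] by (auto split: if_splits)

lemma crit_blockI: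
  assumes "c \<le> n div 2" "\<And>l. l < c \<Longrightarrow> block_ok x l" "c < n div 2 \<Longrightarrow> \<not> block_ok x c"
  shows "crit_block n x = c"
proof (cases "c = n div 2")
  case True
  then show ?thesis using assms unfolding crit_block_def by auto
next
  case False
  with assms have "c < n div 2" "\<not> block_ok x c" by auto
  moreover have "(LEAST l. \<not> block_ok x l) = c"
    using assms(2) \<open>\<not> block_ok x c\<close> by (intro Least_equality) (auto simp: not_less[symmetric])
  ultimately show ?thesis unfolding crit_block_def by auto
qed

lemma nth_below_crit_block:
  assumes "i < 2 * crit_block n x"
  shows "x!i"
proof -
  have "block_ok x (i div 2)" using assms block_ok_below_crit_block[of "i div 2" n x] by auto
  moreover have "i = 2*(i div 2) \<or> i = 2*(i div 2) + 1" by auto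
  ultimately show ?thesis unfolding block_ok_def by metis
qed

lemma dlb_eq_crit_block:
  "dlb n x = (if crit_block n x = n div 2 then real n
     else if block_trap x (crit_block n x) then real (2 * crit_block n x + 1)
     else real (2 * crit_block n x))"
proof (cases "\<forall>l<n div 2. block_ok x l")
  case True
  then show ?thesis unfolding dlb_def crit_block_def block_ok_def by auto
next
  case False
  then obtain l where "l < n div 2" "\<not> block_ok x l" by auto
  moreover have "(LEAST l. \<not> block_ok x l) \<le> l" using \<open>\<not> block_ok x l\<close> by (rule Least_le)
  ultimately have "crit_block n x < n div 2" "crit_block n x = (LEAST l. \<not> block_ok x l)"
    using False unfolding crit_block_def by auto
  with False show ?thesis unfolding dlb_def block_ok_def block_trap_def Let_def by auto
qed

lemma all_less_add_2: "(\<forall>i<(m::nat)+2. P i) \<longleftrightarrow> (\<forall>i<m. P i) \<and> P m \<and> P (m+1)"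
  by (auto simp: less_Suc_eq numeral_2_eq_2)

lemma crit_block_gt_iff:
  assumes "c < n div 2"
  shows "c < crit_block n q \<longleftrightarrow> (\<forall>i<2*c+2. q!i)"
proof
  assume "c < crit_block n q"
  then show "\<forall>i<2*c+2. q!i" using nth_below_crit_block[of _ n q] by auto
next
  assume ones: "\<forall>i<2*c+2. q!i"
  show "c < crit_block n q"
  proof (rule ccontr)
    assume "\<not> c < crit_block n q"
    with assms have "\<not> block_ok q (crit_block n q)" by (intro not_block_ok_crit_block) auto
    moreover have "block_ok q (crit_block n q)"
      using ones \<open>\<not> c < crit_block n q\<close> unfolding block_ok_def by auto
    ultimately show False by simp
  qed
qed

lemma crit_block_trap_iff:
  assumes "c < n div 2"
  shows "crit_block n q = c \<and> block_trap q c \<longleftrightarrow> (\<forall>i<2*c. q!i) \<and> \<not> q!(2*c) \<and> \<not> q!(2*c+1)"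
proof
  assume "crit_block n q = c \<and> block_trap q c"
  then show "(\<forall>i<2*c. q!i) \<and> \<not> q!(2*c) \<and> \<not> q!(2*c+1)"
    using nth_below_crit_block[of _ n q] unfolding block_trap_def by auto
next
  assume q: "(\<forall>i<2*c. q!i) \<and> \<not> q!(2*c) \<and> \<not> q!(2*c+1)"
  then have "crit_block n q = c"
    using assms by (intro crit_blockI) (auto simp: block_ok_def)
  with q show "crit_block n q = c \<and> block_trap q c" unfolding block_trap_def by auto
qed

lemma dlb_le: "even n \<Longrightarrow> dlb n x \<le> real n"
  using crit_block_le[of n x] by (auto simp: dlb_eq_crit_block)

lemma dlb_less_if_crit_block_less:
  assumes "even n" "crit_block n x < crit_block n y"
  shows "dlb n x < dlb n y"
proof -
  have "crit_block n x < n div 2" using assms crit_block_le[of n y] by auto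
  then have "dlb n x \<le> real (2 * crit_block n x + 1)" by (auto simp: dlb_eq_crit_block)
  also have "\<dots> < real (2 * crit_block n y)" using assms by auto
  also have "\<dots> \<le> dlb n y" using assms(1) by (auto simp: dlb_eq_crit_block)
  finally show ?thesis .
qed

lemma crit_block_mono_dlb: "even n \<Longrightarrow> dlb n x \<le> dlb n y \<Longrightarrow> crit_block n x \<le> crit_block n y"
  using dlb_less_if_crit_block_less[of n y x] by (auto simp: not_le[symmetric])

lemma dlb_less_same_crit_block:
  assumes "crit_block n x = c" "crit_block n y = c" "dlb n x < dlb n y"
  shows "c < n div 2" "\<not> block_trap x c" "block_trap y c"
  using assms crit_block_le[of n x] by (auto simp: dlb_eq_crit_block split: if_splits)

lemma block_trap_eq_if_dlb_eq:
  assumes "crit_block n x = c" "crit_block n y = c" "c < n div 2" "dlb n x = dlb n y"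
  shows "block_trap x c = block_trap y c"
proof -
  have "dlb n z = real (2*c + (if block_trap z c then 1 else 0))" if "crit_block n z = c" for z
    using that assms(3) by (auto simp: dlb_eq_crit_block)
  then have "2*c + (if block_trap x c then 1 else 0) = 2*c + (if block_trap y c then 1 else (0::nat))"
    using assms(1,2,4) by (metis of_nat_eq_iff)
  then show ?thesis by (auto split: if_splits)
qed

lemma crit_block_eq_half_iff:
  assumes "even n" "length x = n"
  shows "crit_block n x = n div 2 \<longleftrightarrow> x = replicate n True"
proof
  assume "crit_block n x = n div 2"
  then have "x!i" if "i < n" for i using that assms(1) nth_below_crit_block[of i n x] by auto
  with assms(2) show "x = replicate n True" by (intro nth_equalityI) auto
next
  assume "x = replicate n True"
  with assms show "crit_block n x = n div 2" by (intro crit_blockI) (auto simp: block_ok_def)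
qed

lemma is_opt_dlb_iff:
  assumes "even n" "length q = n"
  shows "is_opt n (dlb n) q \<longleftrightarrow> crit_block n q = n div 2"
proof
  assume "is_opt n (dlb n) q"
  then have "dlb n (replicate n True) \<le> dlb n q" unfolding is_opt_def bitstrings_def by auto
  then have "crit_block n (replicate n True) \<le> crit_block n q" by (rule crit_block_mono_dlb[OF assms(1)])
  then show "crit_block n q = n div 2"
    using crit_block_eq_half_iff[OF assms(1), of "replicate n True"] crit_block_le[of n q] by simp
next
  assume "crit_block n q = n div 2"
  then show "is_opt n (dlb n) q" using dlb_le[OF assms(1)] by (auto simp: is_opt_def dlb_eq_crit_block)
qed

lemma crit_block_eq_if_agree:
  assumes agree: "\<forall>i<2*c+2. i < n \<longrightarrow> x!i = y!i" and le: "crit_block n x \<le> c"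
  shows "crit_block n y = crit_block n x" "dlb n y = dlb n x"
proof -
  have same: "block_ok x l = block_ok y l" "block_trap x l = block_trap y l"
    if "l \<le> c" "l < n div 2" for l
    using that agree unfolding block_ok_def block_trap_def by auto
  show crit: "crit_block n y = crit_block n x"
    using le crit_block_le[of n x] block_ok_below_crit_block[of _ n x] not_block_ok_crit_block[of n x]
    by (intro crit_blockI) (auto simp: same)
  show "dlb n y = dlb n x"
    using le crit_block_le[of n x] by (auto simp: dlb_eq_crit_block crit same)
qed

section \<open>Bit strings and unbiased operators\<close>

lemma length_xor_bits [simp]: "length (xor_bits x z) = min (length x) (length z)"
  unfolding xor_bits_def by simp

lemma nth_xor_bits [simp]: "i < length x \<Longrightarrow> i < length z \<Longrightarrow> xor_bits x z ! i = (x!i \<noteq> z!i)"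
  unfolding xor_bits_def by simp

lemma xor_bits_cancel: "length x = length z \<Longrightarrow> xor_bits (xor_bits x z) z = x"
  by (rule nth_equalityI) auto

lemma xor_bits_eq_iff:
  "length x = n \<Longrightarrow> length y = n \<Longrightarrow> length z = n \<Longrightarrow> xor_bits x z = xor_bits y z \<longleftrightarrow> x = y"
  by (metis xor_bits_cancel)

lemma xor_bits_replicate_False: "length x = n \<Longrightarrow> xor_bits x (replicate n False) = x"
  by (rule nth_equalityI) auto

lemma replicate_False_xor_bits: "length x = n \<Longrightarrow> xor_bits (replicate n False) x = x"
  by (rule nth_equalityI) auto

lemma length_perm_bits [simp]: "length (perm_bits n \<sigma> x) = n"
  unfolding perm_bits_def by simp

lemma nth_perm_bits [simp]: "i < n \<Longrightarrow> perm_bits n \<sigma> x ! i = x ! \<sigma> i"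
  unfolding perm_bits_def by simp

lemma perm_bits_inv:
  assumes "\<sigma> permutes {0..<n}" "length y = n"
  shows "perm_bits n (inv \<sigma>) (perm_bits n \<sigma> y) = y"
proof (rule nth_equalityI)
  fix i assume "i < length (perm_bits n (inv \<sigma>) (perm_bits n \<sigma> y))"
  then have "i < n" "inv \<sigma> i < n"
    using permutes_in_image[OF permutes_inv[OF assms(1)]] by auto
  then show "perm_bits n (inv \<sigma>) (perm_bits n \<sigma> y) ! i = y ! i"
    using permutes_inverses(1)[OF assms(1)] by simp
qed (use assms in auto)

lemma finite_bitstrings: "finite (bitstrings n)"
  using finite_lists_length_eq[of "UNIV :: bool set" n] by (simp add: bitstrings_def)

lemma bitstrings_nonempty: "bitstrings n \<noteq> {}"
  by (auto simp: bitstrings_def intro: exI[of _ "replicate n True"])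

lemma mem_bitstrings: "xs \<in> bitstrings n \<longleftrightarrow> length xs = n"
  by (simp add: bitstrings_def)

lemma set_pmf_of_set_bitstrings: "set_pmf (pmf_of_set (bitstrings n)) = bitstrings n"
  using set_pmf_of_set[OF bitstrings_nonempty finite_bitstrings] .

lemma bij_betw_xor_bits: "z \<in> bitstrings n \<Longrightarrow> bij_betw (\<lambda>y. xor_bits y z) (bitstrings n) (bitstrings n)"
  by (rule bij_betw_byWitness[where f'="\<lambda>y. xor_bits y z"]) (auto simp: bitstrings_def xor_bits_cancel)

lemma bij_betw_perm_bits:
  assumes "\<sigma> permutes {0..<n}"
  shows "bij_betw (perm_bits n \<sigma>) (bitstrings n) (bitstrings n)"
proof (rule bij_betw_byWitness[where f'="perm_bits n (inv \<sigma>)"])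
  have "inv (inv \<sigma>) = \<sigma>" using assms by (simp add: inv_inv_eq permutes_bij)
  then show "\<forall>y\<in>bitstrings n. perm_bits n \<sigma> (perm_bits n (inv \<sigma>) y) = y"
    using perm_bits_inv[OF permutes_inv[OF assms]] by (auto simp: bitstrings_def)
qed (use assms perm_bits_inv in \<open>auto simp: bitstrings_def\<close>)

lemma set_pmf_unbiased: "unary_unbiased n V \<Longrightarrow> x \<in> bitstrings n \<Longrightarrow> set_pmf (V x) \<subseteq> bitstrings n"
  unfolding unary_unbiased_def by auto

lemma unbiased_xor:
  assumes V: "unary_unbiased n V" and x: "x \<in> bitstrings n" and z: "z \<in> bitstrings n"
  shows "V (xor_bits x z) = map_pmf (\<lambda>y. xor_bits y z) (V x)"
proof (rule pmf_eq_map_pmf_if_bij_betw[OF bij_betw_xor_bits[OF z]])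
  show "set_pmf (V x) \<subseteq> bitstrings n" by (rule set_pmf_unbiased[OF V x])
  show "set_pmf (V (xor_bits x z)) \<subseteq> bitstrings n"
    using x z by (intro set_pmf_unbiased[OF V]) (simp add: bitstrings_def)
  show "pmf (V (xor_bits x z)) (xor_bits y z) = pmf (V x) y" if "y \<in> bitstrings n" for y
    using V x z that unfolding unary_unbiased_def by metis
qed

lemma unbiased_from_zero:
  assumes V: "unary_unbiased n V" and x: "x \<in> bitstrings n"
  shows "V x = map_pmf (\<lambda>S. xor_bits S x) (V (replicate n False))"
  using unbiased_xor[OF V _ x, of "replicate n False"] x
  by (auto simp: bitstrings_def replicate_False_xor_bits)

lemma unbiased_perm_invariant:
  assumes V: "unary_unbiased n V" and \<sigma>: "\<sigma> permutes {0..<n}"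
  shows "map_pmf (perm_bits n \<sigma>) (V (replicate n False)) = V (replicate n False)"
proof -
  have zero: "perm_bits n \<sigma> (replicate n False) = replicate n False"
    using permutes_in_image[OF \<sigma>] by (intro nth_equalityI) auto
  have z: "replicate n False \<in> bitstrings n" by (simp add: bitstrings_def)
  have "pmf (V (replicate n False)) (perm_bits n \<sigma> y) = pmf (V (replicate n False)) y"
    if "y \<in> bitstrings n" for y
  proof -
    have "pmf (V (replicate n False)) y =
        pmf (V (perm_bits n \<sigma> (replicate n False))) (perm_bits n \<sigma> y)"
      using V z that \<sigma> unfolding unary_unbiased_def by blast
    then show ?thesis by (simp add: zero)
  qed
  then show ?thesis
    by (intro pmf_eq_map_pmf_if_bij_betw[OF bij_betw_perm_bits[OF \<sigma>], symmetric]
        set_pmf_unbiased[OF V z])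
qed

section \<open>Leaving the critical block\<close>

lemma crit_block_xor_swap_iff:
  assumes "length S = n" "length x = n" "c < n div 2" "x!(2*c) \<noteq> x!(2*c+1)"
  defines "S' \<equiv> perm_bits n (Transposition.transpose (2*c) (2*c+1)) S"
  shows "c < crit_block n (xor_bits S x) \<longleftrightarrow>
    crit_block n (xor_bits S' x) = c \<and> block_trap (xor_bits S' x) c"
proof -
  have "2*c+1 < n" using assms(3) by auto
  then have "S'!i = S!i" "xor_bits S' x ! i = xor_bits S x ! i" if "i < 2*c" for i
    using that assms(1,2) by (auto simp: S'_def Transposition.transpose_def)
  moreover have "S'!(2*c) = S!(2*c+1)" "S'!(2*c+1) = S!(2*c)"
    using \<open>2*c+1 < n\<close> by (auto simp: S'_def Transposition.transpose_def)
  moreover have "c < crit_block n (xor_bits S x) \<longleftrightarrow>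
      (\<forall>i<2*c. xor_bits S x ! i) \<and> xor_bits S x ! (2*c) \<and> xor_bits S x ! (2*c+1)"
    by (simp only: crit_block_gt_iff[OF assms(3)] all_less_add_2)
  ultimately show ?thesis
    using assms \<open>2*c+1 < n\<close> by (auto simp: crit_block_trap_iff)
qed

lemma prob_leave_mixed_block_eq_prob_trap:
  assumes V: "unary_unbiased n V" and x: "x \<in> bitstrings n"
    and c: "crit_block n x = c" "c < n div 2" and mixed: "\<not> block_trap x c"
  shows "measure (V x) {q. c < crit_block n q} = measure (V x) {q. crit_block n q = c \<and> block_trap q c}"
proof -
  let ?R = "V (replicate n False)" and ?\<sigma> = "Transposition.transpose (2*c) (2*c+1)"
  let ?T = "{S. crit_block n (xor_bits S x) = c \<and> block_trap (xor_bits S x) c}"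
  have \<sigma>: "?\<sigma> permutes {0..<n}" using c(2) by (intro permutes_swap_id) auto
  have "x!(2*c) \<noteq> x!(2*c+1)"
    using mixed not_block_ok_crit_block[of n x] c unfolding block_ok_def block_trap_def by auto
  then have "{S. c < crit_block n (xor_bits S x)} \<inter> bitstrings n = perm_bits n ?\<sigma> -` ?T \<inter> bitstrings n"
    using x c(2) by (auto simp: bitstrings_def crit_block_xor_swap_iff)
  moreover have "set_pmf ?R \<subseteq> bitstrings n" by (rule set_pmf_unbiased[OF V]) (simp add: bitstrings_def)
  ultimately have swap: "measure ?R {S. c < crit_block n (xor_bits S x)} = measure (map_pmf (perm_bits n ?\<sigma>) ?R) ?T"
    unfolding measure_map_pmf by (rule measure_pmf_eq_if_Int_eq[rotated])
  have "measure (V x) {q. c < crit_block n q} = measure ?R {S. c < crit_block n (xor_bits S x)}"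
    by (simp add: unbiased_from_zero[OF V x])
  also have "\<dots> = measure ?R ?T" by (simp only: swap unbiased_perm_invariant[OF V \<sigma>])
  also have "\<dots> = measure (V x) {q. crit_block n q = c \<and> block_trap q c}"
    by (simp add: unbiased_from_zero[OF V x])
  finally show ?thesis .
qed

lemma prob_leave_trap_eq:
  assumes V: "unary_unbiased n V" and x: "x \<in> bitstrings n"
    and c: "crit_block n x = c" "c < n div 2" and trap: "block_trap x c"
  shows "measure (V x) {q. c < crit_block n q} =
    measure (V (replicate n False)) {S. (\<forall>i<2*c. \<not> S!i) \<and> S!(2*c) \<and> S!(2*c+1)}"
proof -
  let ?R = "V (replicate n False)" and ?G = "{S. (\<forall>i<2*c. \<not> S!i) \<and> S!(2*c) \<and> S!(2*c+1)}"
  have "c < crit_block n (xor_bits S x) \<longleftrightarrow> S \<in> ?G" if "length S = n" for S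
  proof -
    have "c < crit_block n (xor_bits S x) \<longleftrightarrow>
        (\<forall>i<2*c. xor_bits S x ! i) \<and> xor_bits S x ! (2*c) \<and> xor_bits S x ! (2*c+1)"
      by (simp only: crit_block_gt_iff[OF c(2)] all_less_add_2)
    then show ?thesis
      using that x c trap nth_below_crit_block[of _ n x] by (auto simp: bitstrings_def block_trap_def)
  qed
  then have "{S. c < crit_block n (xor_bits S x)} \<inter> bitstrings n = ?G \<inter> bitstrings n"
    by (auto simp: bitstrings_def)
  moreover have "set_pmf ?R \<subseteq> bitstrings n" by (rule set_pmf_unbiased[OF V]) (simp add: bitstrings_def)
  ultimately have "measure ?R {S. c < crit_block n (xor_bits S x)} = measure ?R ?G"
    by (rule measure_pmf_eq_if_Int_eq[rotated])
  then show ?thesis by (simp add: unbiased_from_zero[OF V x])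
qed

lemma transpose_pair_apply:
  assumes "(a::nat) < c" "c \<le> b" "b < 2*c"
  defines "\<sigma> \<equiv> Transposition.transpose (2*c) a \<circ> Transposition.transpose (2*c+1) b"
  shows "\<sigma> (2*c) = a" "\<sigma> (2*c+1) = b" "\<And>i. i < 2*c \<Longrightarrow> i \<noteq> a \<Longrightarrow> i \<noteq> b \<Longrightarrow> \<sigma> i = i"
  using assms by (auto simp: Transposition.transpose_def)

text \<open>Moving the two flipped bits to positions \<open>a < c \<le> b < 2c\<close> gives \<open>c\<^sup>2\<close> disjoint events
  of the same probability.\<close>

lemma prob_flip_only_block_le:
  assumes V: "unary_unbiased n V" and c: "2*c+1 < n"
  shows "real c ^ 2 * measure (V (replicate n False)) {S. (\<forall>i<2*c. \<not> S!i) \<and> S!(2*c) \<and> S!(2*c+1)} \<le> 1"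
proof -
  let ?R = "V (replicate n False)" and ?G = "{S. (\<forall>i<2*c. \<not> S!i) \<and> S!(2*c) \<and> S!(2*c+1)}"
  define \<sigma> where "\<sigma> ab = Transposition.transpose (2*c) (fst ab) \<circ> Transposition.transpose (2*c+1) (snd ab)"
    for ab :: "nat \<times> nat"
  define I where "I = {..<c} \<times> {c..<2*c}"
  have "real (card I) * measure ?R ?G \<le> 1"
  proof (rule card_mult_measure_le_1)
    show "finite I" by (simp add: I_def)
    show "map_pmf (perm_bits n (\<sigma> ab)) ?R = ?R" if "ab \<in> I" for ab
      using that c unfolding I_def \<sigma>_def
      by (intro unbiased_perm_invariant[OF V] permutes_compose permutes_swap_id) auto
    have flipped: "S!a \<and> S!b \<and> (\<forall>i<2*c. i \<noteq> a \<and> i \<noteq> b \<longrightarrow> \<not> S!i)"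
      if "(a, b) \<in> I" "perm_bits n (\<sigma> (a, b)) S \<in> ?G" for a b S
      using that c transpose_pair_apply[of a c b] unfolding I_def \<sigma>_def by auto
    show "disjoint_family_on (\<lambda>ab. perm_bits n (\<sigma> ab) -` ?G) I"
      unfolding disjoint_family_on_def
    proof (intro ballI impI)
      fix ab ab' assume ab: "ab \<in> I" "ab' \<in> I" "ab \<noteq> ab'"
      obtain a b a' b' where eq: "ab = (a, b)" "ab' = (a', b')" by fastforce
      have range: "a < c" "c \<le> b" "b < 2*c" "a' < c" "c \<le> b'" "b' < 2*c"
        using ab(1,2) unfolding eq I_def by auto
      have "a = a' \<and> b = b'"
        if "perm_bits n (\<sigma> (a, b)) S \<in> ?G" "perm_bits n (\<sigma> (a', b')) S \<in> ?G" for S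
        using flipped[OF ab(1)[unfolded eq] that(1)] flipped[OF ab(2)[unfolded eq] that(2)] range
        by (metis leD less_trans nat_neq_iff order.strict_trans2)
      then show "perm_bits n (\<sigma> ab) -` ?G \<inter> perm_bits n (\<sigma> ab') -` ?G = {}"
        using ab(3) unfolding eq by auto
    qed
  qed
  then show ?thesis by (simp add: I_def power2_eq_square)
qed

lemma prob_leave_trap_le:
  assumes "unary_unbiased n V" "x \<in> bitstrings n" "crit_block n x = c" "c < n div 2" "block_trap x c"
  shows "real c ^ 2 * measure (V x) {q. c < crit_block n q} \<le> 1"
  using prob_flip_only_block_le[OF assms(1), of c] assms(4) by (simp add: prob_leave_trap_eq[OF assms])

section \<open>Flipping bits beyond the critical block\<close>

definition flips_beyond :: "nat \<Rightarrow> bool list \<Rightarrow> nat \<Rightarrow> bool" where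
  "flips_beyond n z c \<longleftrightarrow> (\<forall>i<n. z!i \<longrightarrow> 2*c+2 \<le> i)"

lemma flips_beyond_mono: "flips_beyond n z c' \<Longrightarrow> c \<le> c' \<Longrightarrow> flips_beyond n z c"
  unfolding flips_beyond_def by force

lemma xor_bits_flips_beyond_half:
  assumes "length x = n" "length z = n" "flips_beyond n z (n div 2)"
  shows "xor_bits x z = x"
proof (rule nth_equalityI)
  fix i assume "i < length (xor_bits x z)"
  moreover have "\<not> 2 * (n div 2) + 2 \<le> i" if "i < n" for i using that by linarith
  ultimately show "xor_bits x z ! i = x ! i" using assms by (auto simp: flips_beyond_def)
qed (use assms in simp)

lemma crit_block_xor:
  assumes "length x = n" "length z = n" "flips_beyond n z c" "crit_block n x \<le> c"
  shows "crit_block n (xor_bits x z) = crit_block n x" "dlb n (xor_bits x z) = dlb n x"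
  using assms by (auto simp: flips_beyond_def intro!: crit_block_eq_if_agree)

lemma crit_block_xor_gt:
  assumes "length x = n" "length z = n" "flips_beyond n z c" "c < crit_block n x"
  shows "c < crit_block n (xor_bits x z)"
proof (rule ccontr)
  assume "\<not> c < crit_block n (xor_bits x z)"
  then have "crit_block n (xor_bits (xor_bits x z) z) = crit_block n (xor_bits x z)"
    using assms(1-3) by (intro crit_block_xor) auto
  with assms \<open>\<not> c < crit_block n (xor_bits x z)\<close> show False by (simp add: xor_bits_cancel)
qed

fun flip_state :: "nat \<Rightarrow> bool list \<Rightarrow> bb_state \<Rightarrow> bb_state" where
  "flip_state n z (h, x, d) =
     (if length x = n \<and> flips_beyond n z (crit_block n x) then (h, xor_bits x z, d) else (h, x, d))"

lemma flip_state_flip_state: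
  assumes "length z = n"
  shows "flip_state n z (flip_state n z s) = s"
proof -
  obtain h x d where s: "s = (h, x, d)" by (cases s)
  show ?thesis
  proof (cases "length x = n \<and> flips_beyond n z (crit_block n x)")
    case True
    then have "crit_block n (xor_bits x z) = crit_block n x" using assms by (intro crit_block_xor) auto
    then show ?thesis using True s assms by (auto simp: xor_bits_cancel)
  qed (auto simp: s)
qed

section \<open>The run of an elitist unbiased algorithm on DLB\<close>

definition accept_pmf :: "(real list \<Rightarrow> bool pmf) \<Rightarrow> nat \<Rightarrow> real list \<Rightarrow> bool list \<Rightarrow> bool list \<Rightarrow> bool pmf" where
  "accept_pmf Tie n h x q = (if dlb n q > dlb n x then return_pmf True
     else if dlb n q < dlb n x then return_pmf False else Tie (h @ [dlb n q]))"

definition next_state :: "nat \<Rightarrow> real list \<Rightarrow> bool list \<Rightarrow> bool list \<Rightarrow> bool \<Rightarrow> bb_state" where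
  "next_state n h x q k = (h @ [dlb n q], if k then q else x, is_opt n (dlb n) q)"

lemma bb_step_running:
  "bb_step n (dlb n) Op Tie (h, x, False) =
     bind_pmf (Op h x) (\<lambda>q. map_pmf (next_state n h x q) (accept_pmf Tie n h x q))"
  unfolding bb_step_def accept_pmf_def next_state_def Let_def map_pmf_def by simp

lemma bb_step_finished: "bb_step n f Op Tie (h, x, True) = return_pmf (h, x, True)"
  unfolding bb_step_def by simp

lemma accept_pmf_True: "True \<in> set_pmf (accept_pmf Tie n h x q) \<Longrightarrow> dlb n x \<le> dlb n q"
  unfolding accept_pmf_def by (auto split: if_splits)

lemma accept_pmf_False: "False \<in> set_pmf (accept_pmf Tie n h x q) \<Longrightarrow> dlb n q \<le> dlb n x"
  unfolding accept_pmf_def by (auto split: if_splits)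

lemma accept_pmf_xor:
  assumes "even n" "length x = n" "length q = n" "length z = n" "flips_beyond n z (crit_block n x)"
  shows "accept_pmf Tie n h (xor_bits x z) (xor_bits q z) = accept_pmf Tie n h x q"
proof (cases "crit_block n q \<le> crit_block n x")
  case True
  then show ?thesis using assms crit_block_xor[of _ n z "crit_block n x"] by (simp add: accept_pmf_def)
next
  case False
  then have "crit_block n x < crit_block n (xor_bits q z)" using assms by (intro crit_block_xor_gt) auto
  then have "dlb n (xor_bits x z) < dlb n (xor_bits q z)"
    using assms crit_block_xor[of x n z "crit_block n x"] by (auto intro: dlb_less_if_crit_block_less)
  moreover have "dlb n x < dlb n q" using False assms(1) by (simp add: dlb_less_if_crit_block_less)
  ultimately show ?thesis by (simp add: accept_pmf_def)
qed

fun valid_state :: "nat \<Rightarrow> bb_state \<Rightarrow> bool" where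
  "valid_state n (h, x, d) \<longleftrightarrow> length x = n \<and> (d \<longleftrightarrow> x = replicate n True)"

abbreviation bb_point :: "bb_state \<Rightarrow> bool list" where
  "bb_point s \<equiv> fst (snd s)"

abbreviation bb_done :: "bb_state \<Rightarrow> bool" where
  "bb_done s \<equiv> snd (snd s)"

locale elitist_dlb =
  fixes n :: nat and Op :: "real list \<Rightarrow> bool list \<Rightarrow> bool list pmf" and Tie :: "real list \<Rightarrow> bool pmf"
  assumes even_n: "even n" and unbiased: "\<And>h. unary_unbiased n (Op h)"
begin

abbreviation run :: "nat \<Rightarrow> bb_state pmf" where
  "run t \<equiv> bb_state n (dlb n) Op Tie t"

abbreviation step :: "bb_state \<Rightarrow> bb_state pmf" where
  "step \<equiv> bb_step n (dlb n) Op Tie"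

lemma length_offspring: "length x = n \<Longrightarrow> q \<in> set_pmf (Op h x) \<Longrightarrow> length q = n"
  using set_pmf_unbiased[OF unbiased, of x h] by (auto simp: bitstrings_def)

lemma finite_set_pmf_Op: "length x = n \<Longrightarrow> finite (set_pmf (Op h x))"
  using set_pmf_unbiased[OF unbiased, of x h] finite_bitstrings[of n]
  by (auto simp: bitstrings_def intro: finite_subset)

lemma is_opt_iff: "length q = n \<Longrightarrow> is_opt n (dlb n) q \<longleftrightarrow> q = replicate n True"
  using is_opt_dlb_iff[OF even_n] crit_block_eq_half_iff[OF even_n] by simp

lemma crit_block_less_half: "length x = n \<Longrightarrow> x \<noteq> replicate n True \<Longrightarrow> crit_block n x < n div 2"
  using crit_block_eq_half_iff[OF even_n] crit_block_le[of n x] by fastforce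

lemma step_valid:
  assumes "valid_state n s" "s' \<in> set_pmf (step s)"
  shows "valid_state n s'" "crit_block n (bb_point s) \<le> crit_block n (bb_point s')"
proof -
  obtain h x d where s: "s = (h, x, d)" by (cases s)
  have "valid_state n s' \<and> crit_block n x \<le> crit_block n (bb_point s')"
  proof (cases d)
    case True
    then show ?thesis using assms s by (simp add: bb_step_finished)
  next
    case False
    with assms s have x: "length x = n" "x \<noteq> replicate n True" by auto
    from assms(2) s False obtain q k where q: "q \<in> set_pmf (Op h x)"
      and k: "k \<in> set_pmf (accept_pmf Tie n h x q)" and s': "s' = next_state n h x q k"
      by (auto simp: bb_step_running)
    have "length q = n" using length_offspring[OF x(1) q] .
    moreover have "k" if "q = replicate n True"
    proof -
      have "dlb n x < real n"
        using crit_block_less_half[OF x] by (auto simp: dlb_eq_crit_block)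
      moreover have "dlb n q = real n" using that even_n by (simp add: dlb_eq_crit_block crit_block_eq_half_iff)
      ultimately show ?thesis using k accept_pmf_False[of Tie n h x q] by (cases k) auto
    qed
    moreover have "crit_block n x \<le> crit_block n (if k then q else x)"
      using k accept_pmf_True[of Tie n h x q] crit_block_mono_dlb[OF even_n] by (cases k) auto
    ultimately show ?thesis using s' x by (auto simp: next_state_def is_opt_iff)
  qed
  then show "valid_state n s'" "crit_block n (bb_point s) \<le> crit_block n (bb_point s')"
    using s by auto
qed

lemma valid_run: "s \<in> set_pmf (run t) \<Longrightarrow> valid_state n s"
proof (induction t arbitrary: s)
  case 0
  then obtain x where "x \<in> bitstrings n" "s = ([dlb n x], x, is_opt n (dlb n) x)"
    by (auto simp: bb_init_def set_pmf_of_set_bitstrings)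
  then show ?case by (auto simp: bitstrings_def is_opt_iff)
next
  case (Suc t)
  then obtain s0 where "s0 \<in> set_pmf (run t)" "s \<in> set_pmf (step s0)" by auto
  then show ?case using Suc.IH step_valid(1) by blast
qed

lemma finite_set_pmf_step:
  assumes "valid_state n s"
  shows "finite (set_pmf (step s))"
proof -
  obtain h x d where s: "s = (h, x, d)" by (cases s)
  then show ?thesis
    using assms finite_set_pmf_Op[of x h] by (cases d) (auto simp: bb_step_running bb_step_finished)
qed

lemma finite_set_pmf_run: "finite (set_pmf (run t))"
proof (induction t)
  case 0
  then show ?case
    by (simp add: bb_init_def set_pmf_of_set_bitstrings finite_bitstrings)
next
  case (Suc t)
  then show ?case using finite_set_pmf_step valid_run by auto
qed

lemma integrable_run: "integrable (run t) (f :: bb_state \<Rightarrow> real)"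
  by (rule integrable_measure_pmf_finite[OF finite_set_pmf_run])

text \<open>If \<open>z\<close> flips only bits beyond block \<open>c\<close>, xoring with \<open>z\<close> preserves the fitness of
  every string whose critical block is at most \<open>c\<close> and keeps the critical block of every other
  string above \<open>c\<close>.  Applied with the critical block of the current search point, it thus
  preserves all acceptance decisions, and by unbiasedness the distribution of the run
  (\<open>map_pmf_flip_state_run\<close>).\<close>

lemma next_state_xor_iff:
  assumes len: "length x = n" "length q = n" "length x' = n" "length z = n"
    and z: "flips_beyond n z (crit_block n x)" "flips_beyond n z (crit_block n x')"
    and k: "k \<in> set_pmf (accept_pmf Tie n h x q)"
  shows "next_state n h (xor_bits x z) (xor_bits q z) k = (h', xor_bits x' z, d') \<longleftrightarrow>
    next_state n h x q k = (h', x', d')"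
proof -
  have q_xor: "dlb n (xor_bits q z) = dlb n q \<and> is_opt n (dlb n) (xor_bits q z) = is_opt n (dlb n) q"
    if "flips_beyond n z (crit_block n q)"
    using crit_block_xor[OF len(2,4) that order.refl] len(2,4) by (simp add: is_opt_dlb_iff[OF even_n])
  show ?thesis
  proof (cases k)
    case True
    then show ?thesis using len z(2) q_xor by (auto simp: next_state_def xor_bits_eq_iff)
  next
    case False
    then have "crit_block n q \<le> crit_block n x"
      using k accept_pmf_False[of Tie n h x q] crit_block_mono_dlb[OF even_n] by simp
    then show ?thesis
      using False len q_xor flips_beyond_mono[OF z(1)] by (auto simp: next_state_def xor_bits_eq_iff)
  qed
qed

lemma step_xor:
  assumes "length x = n" "length z = n" "flips_beyond n z (crit_block n x)"
  shows "step (h, xor_bits x z, False) =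
    bind_pmf (Op h x) (\<lambda>q. map_pmf (next_state n h (xor_bits x z) (xor_bits q z)) (accept_pmf Tie n h x q))"
proof -
  have "x \<in> bitstrings n" "z \<in> bitstrings n" using assms by (auto simp: bitstrings_def)
  then have "step (h, xor_bits x z, False) = bind_pmf (Op h x) (\<lambda>q.
      map_pmf (next_state n h (xor_bits x z) (xor_bits q z)) (accept_pmf Tie n h (xor_bits x z) (xor_bits q z)))"
    by (simp add: bb_step_running unbiased_xor[OF unbiased] bind_map_pmf)
  also have "\<dots> = bind_pmf (Op h x) (\<lambda>q.
      map_pmf (next_state n h (xor_bits x z) (xor_bits q z)) (accept_pmf Tie n h x q))"
    using assms length_offspring by (intro bind_pmf_cong refl) (simp add: accept_pmf_xor[OF even_n])
  finally show ?thesis .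
qed

lemma pmf_step_flip_state:
  assumes s: "valid_state n s" and z: "length z = n"
    and x': "length x' = n" "flips_beyond n z (crit_block n x')"
  shows "pmf (step (flip_state n z s)) (h', xor_bits x' z, d') = pmf (step s) (h', x', d')"
proof -
  obtain h x d where s_eq: "s = (h, x, d)" by (cases s)
  have x: "length x = n" using s s_eq by simp
  have crit_x': "crit_block n (xor_bits x' z) = crit_block n x'" using x' z by (intro crit_block_xor) auto
  consider "d" | "\<not> d" "flips_beyond n z (crit_block n x)" | "\<not> d" "\<not> flips_beyond n z (crit_block n x)"
    by blast
  then show ?thesis
  proof cases
    case 1
    then have ones: "x = replicate n True" using s s_eq by simp
    then have "crit_block n x = n div 2" using crit_block_eq_half_iff[OF even_n x] by simp
    then have "flip_state n z s = s" using s_eq xor_bits_flips_beyond_half[OF x z] by simp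
    moreover have "xor_bits x' z = replicate n True \<longleftrightarrow> x' = replicate n True"
      using crit_x' x' z crit_block_eq_half_iff[OF even_n] by (metis length_xor_bits min.idem)
    then have "s = (h', xor_bits x' z, d') \<longleftrightarrow> s = (h', x', d')" using s_eq ones by auto
    ultimately show ?thesis using s_eq 1 by (simp add: bb_step_finished pmf_return indicator_def)
  next
    case 2
    then have "flip_state n z s = (h, xor_bits x z, False)" using s_eq x by simp
    then have "pmf (step (flip_state n z s)) (h', xor_bits x' z, d') = (\<integral>q.
        pmf (map_pmf (next_state n h (xor_bits x z) (xor_bits q z)) (accept_pmf Tie n h x q))
          (h', xor_bits x' z, d') \<partial>Op h x)"
      using x z 2 by (simp add: step_xor pmf_bind)
    also have "\<dots> = (\<integral>q. pmf (map_pmf (next_state n h x q) (accept_pmf Tie n h x q)) (h', x', d') \<partial>Op h x)"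
      using x z x' 2(2) length_offspring[OF x]
      by (intro integral_cong_AE AE_pmfI pmf_map_pmf_eq_if_preimage_eq next_state_xor_iff) auto
    also have "\<dots> = pmf (step s) (h', x', d')" using s_eq 2 by (simp add: bb_step_running pmf_bind)
    finally show ?thesis .
  next
    case 3
    then have "flip_state n z s = s" using s_eq by simp
    moreover have "pmf (step s) y = 0" if "crit_block n (bb_point y) = crit_block n x'" for y
      using step_valid(2)[OF s] that 3(2) flips_beyond_mono[OF x'(2)] s_eq
      by (fastforce simp: pmf_eq_0_set_pmf)
    ultimately show ?thesis using crit_x' by simp
  qed
qed

lemma map_pmf_flip_state_init:
  assumes z: "length z = n"
  shows "map_pmf (flip_state n z) (run 0) = run 0"
proof -
  let ?U = "pmf_of_set (bitstrings n)" and ?init = "\<lambda>x. ([dlb n x], x, is_opt n (dlb n) x)"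
  define \<phi> where "\<phi> x = (if flips_beyond n z (crit_block n x) then xor_bits x z else x)" for x
  have \<phi>: "crit_block n (\<phi> x) = crit_block n x \<and> dlb n (\<phi> x) = dlb n x \<and> \<phi> x \<in> bitstrings n"
    if "x \<in> bitstrings n" for x
    using that z crit_block_xor[of x n z] by (auto simp: \<phi>_def bitstrings_def)
  then have "\<phi> (\<phi> x) = x" if "x \<in> bitstrings n" for x
    using that z by (auto simp: \<phi>_def bitstrings_def xor_bits_cancel)
  with \<phi> have "bij_betw \<phi> (bitstrings n) (bitstrings n)"
    by (intro bij_betw_byWitness[where f'=\<phi>]) auto
  then have U: "map_pmf \<phi> ?U = ?U"
    by (simp add: map_pmf_of_set_inj bij_betw_def bitstrings_nonempty finite_bitstrings)
  have "flip_state n z (?init x) = ?init (\<phi> x)" if "x \<in> bitstrings n" for x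
    using that \<phi>[OF that] is_opt_dlb_iff[OF even_n] by (auto simp: \<phi>_def bitstrings_def)
  then have "map_pmf (flip_state n z) (run 0) = map_pmf (\<lambda>x. ?init (\<phi> x)) ?U"
    by (auto simp: bb_init_def map_pmf_comp set_pmf_of_set_bitstrings
        intro!: map_pmf_cong)
  also have "\<dots> = map_pmf ?init (map_pmf \<phi> ?U)" by (simp add: map_pmf_comp)
  also have "\<dots> = run 0" by (simp add: bb_init_def U)
  finally show ?thesis .
qed

lemma map_pmf_flip_state_run:
  assumes z: "length z = n"
  shows "map_pmf (flip_state n z) (run t) = run t"
proof (induction t)
  case 0
  show ?case using map_pmf_flip_state_init[OF z] .
next
  case (Suc t)
  have "pmf (run (Suc t)) (flip_state n z s') = pmf (run (Suc t)) s'" for s'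
  proof -
    obtain h' x' d' where s': "s' = (h', x', d')" by (cases s')
    show ?thesis
    proof (cases "length x' = n \<and> flips_beyond n z (crit_block n x')")
      case True
      have "pmf (run (Suc t)) (flip_state n z s') = (\<integral>s. pmf (step s) (h', xor_bits x' z, d') \<partial>run t)"
        using True s' by (simp add: pmf_bind)
      also have "\<dots> = (\<integral>s. pmf (step (flip_state n z s)) (h', xor_bits x' z, d') \<partial>run t)"
        by (rule integral_map_pmf_invariant[OF Suc.IH, symmetric])
      also have "\<dots> = (\<integral>s. pmf (step s) (h', x', d') \<partial>run t)"
        using True z valid_run by (intro integral_cong_AE AE_pmfI pmf_step_flip_state) auto
      also have "\<dots> = pmf (run (Suc t)) s'" by (simp add: pmf_bind s')
      finally show ?thesis .
    next
      case False
      then show ?thesis by (auto simp: s')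
    qed
  qed
  then show ?case by (simp add: map_pmf_involution_eq_iff[OF flip_state_flip_state[OF z]])
qed

end

section \<open>The potential\<close>

definition block_potential :: "nat \<Rightarrow> nat \<Rightarrow> nat \<Rightarrow> bool list \<Rightarrow> real" where
  "block_potential n M j y =
    (if j < M \<or> j < crit_block n y then 0
     else if j = crit_block n y then (if block_trap y j then 2 else 1)
     else if block_ok y j then 0 else 1)"

definition potential :: "nat \<Rightarrow> nat \<Rightarrow> bool list \<Rightarrow> real" where
  "potential n M y = (\<Sum>j<n div 2. block_potential n M j y)"

lemma block_potential_nonneg: "0 \<le> block_potential n M j y"
  and block_potential_le_2: "block_potential n M j y \<le> 2"
  unfolding block_potential_def by auto

lemma block_potential_ge:
  "j < n div 2 \<Longrightarrow> (if M \<le> j \<and> \<not> block_ok y j then 1 else 0) \<le> block_potential n M j y"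
  using block_ok_below_crit_block[of j n y] unfolding block_potential_def by auto

lemma block_potential_above_crit_block:
  "crit_block n y < j \<Longrightarrow> block_potential n M j y = (if M \<le> j \<and> \<not> block_ok y j then 1 else 0)"
  unfolding block_potential_def by auto

lemma abs_potential_le: "\<bar>potential n M y\<bar> \<le> 2 * real (n div 2)"
proof -
  have "\<bar>potential n M y\<bar> = (\<Sum>j<n div 2. block_potential n M j y)"
    unfolding potential_def by (simp add: block_potential_nonneg sum_nonneg)
  also have "\<dots> \<le> (\<Sum>j<n div 2. 2)" by (intro sum_mono block_potential_le_2)
  finally show ?thesis by simp
qed

definition block_mask :: "nat \<Rightarrow> nat \<Rightarrow> bool \<times> bool \<Rightarrow> bool list" where
  "block_mask n j uv = map (\<lambda>i. (i = 2*j \<and> fst uv) \<or> (i = 2*j+1 \<and> snd uv)) [0..<n]"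

lemma length_block_mask [simp]: "length (block_mask n j uv) = n"
  unfolding block_mask_def by simp

lemma flips_beyond_block_mask: "c < j \<Longrightarrow> flips_beyond n (block_mask n j uv) c"
  unfolding flips_beyond_def block_mask_def by auto

lemma not_flips_beyond_block_mask:
  assumes "j \<le> c" "2*j+1 < n" "uv \<noteq> (False, False)"
  shows "\<not> flips_beyond n (block_mask n j uv) c"
proof -
  have "block_mask n j uv ! (2*j) \<or> block_mask n j uv ! (2*j+1)"
    using assms(2,3) by (cases uv) (auto simp: block_mask_def)
  then obtain i where "i \<in> {2*j, 2*j+1}" "block_mask n j uv ! i" by blast
  moreover from this(1) have "i < n" "\<not> 2*c+2 \<le> i" using assms(1,2) by auto
  ultimately show ?thesis unfolding flips_beyond_def by blast
qed

lemma block_mask_False_False: "block_mask n j (False, False) = replicate n False"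
  unfolding block_mask_def by (simp add: map_replicate_const)

lemma sum_UNIV_bool_pair:
  "(\<Sum>uv\<in>UNIV. f uv) = f (False, False) + f (False, True) + f (True, False) + f (True, True)"
  by (simp add: UNIV_Times_UNIV[symmetric] UNIV_bool add.assoc del: UNIV_Times_UNIV)

lemma sum_not_block_ok_xor_block_mask:
  assumes "length y = n" "2*j+1 < n"
  shows "(\<Sum>uv\<in>UNIV. if \<not> block_ok (xor_bits y (block_mask n j uv)) j then 1 else 0 :: real) = 3"
proof -
  have "block_ok (xor_bits y (block_mask n j uv)) j \<longleftrightarrow> y!(2*j) \<noteq> fst uv \<and> y!(2*j+1) \<noteq> snd uv" for uv
    using assms unfolding block_ok_def block_mask_def by simp
  then show ?thesis by (simp add: sum_UNIV_bool_pair)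
qed

lemma sum_block_potential_xor_block_mask_ge:
  assumes "length y = n" "j < n div 2"
  shows "(if M \<le> j then 3 else 0) \<le> (\<Sum>uv\<in>UNIV. block_potential n M j (xor_bits y (block_mask n j uv)))"
proof -
  have "(if M \<le> j then 3 else 0) =
      (\<Sum>uv\<in>UNIV. if M \<le> j \<and> \<not> block_ok (xor_bits y (block_mask n j uv)) j then 1 else 0 :: real)"
    using assms sum_not_block_ok_xor_block_mask[of y n j] by auto
  also have "\<dots> \<le> (\<Sum>uv\<in>UNIV. block_potential n M j (xor_bits y (block_mask n j uv)))"
    using assms(2) by (intro sum_mono block_potential_ge)
  finally show ?thesis .
qed

lemma sum_block_potential_xor_block_mask_eq:
  assumes "length y = n" "crit_block n y < j" "j < n div 2"
  shows "(\<Sum>uv\<in>UNIV. block_potential n M j (xor_bits y (block_mask n j uv))) = (if M \<le> j then 3 else 0)"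
proof -
  have "crit_block n (xor_bits y (block_mask n j uv)) = crit_block n y" for uv
    by (rule crit_block_xor[OF assms(1) _ flips_beyond_block_mask[OF assms(2)]]) simp_all
  then have "block_potential n M j (xor_bits y (block_mask n j uv)) =
      (if M \<le> j \<and> \<not> block_ok (xor_bits y (block_mask n j uv)) j then 1 else 0)" for uv
    using assms(2) by (simp add: block_potential_above_crit_block)
  then show ?thesis using assms sum_not_block_ok_xor_block_mask[of y n j] by auto
qed

lemma integral_not_block_ok_uniform:
  assumes "j < n div 2"
  shows "(\<integral>x. (if \<not> block_ok x j then 1 else 0 :: real) \<partial>pmf_of_set (bitstrings n)) = 3/4"
proof -
  let ?U = "pmf_of_set (bitstrings n)" and ?bad = "\<lambda>x. if \<not> block_ok x j then 1 else 0 :: real"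
  have U: "map_pmf (\<lambda>x. xor_bits x (block_mask n j uv)) ?U = ?U" for uv
  proof -
    have "bij_betw (\<lambda>x. xor_bits x (block_mask n j uv)) (bitstrings n) (bitstrings n)"
      by (rule bij_betw_xor_bits) (simp add: bitstrings_def)
    then show ?thesis
      by (simp add: map_pmf_of_set_inj bij_betw_def bitstrings_nonempty finite_bitstrings)
  qed
  have "4 * (\<integral>x. ?bad x \<partial>?U) = (\<Sum>uv\<in>UNIV. \<integral>x. ?bad (xor_bits x (block_mask n j uv)) \<partial>?U)"
    by (simp add: integral_map_pmf_invariant[OF U, where F = ?bad])
  also have "\<dots> = (\<integral>x. (\<Sum>uv\<in>UNIV. ?bad (xor_bits x (block_mask n j uv))) \<partial>?U)"
    by (rule Bochner_Integration.integral_sum[symmetric])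
       (simp add: integrable_measure_pmf_finite bitstrings_nonempty finite_bitstrings)
  also have "\<dots> = (\<integral>x. 3 \<partial>?U)"
    using assms
    by (intro integral_cong_AE AE_pmfI)
       (simp_all add: set_pmf_of_set_bitstrings mem_bitstrings sum_not_block_ok_xor_block_mask)
  finally show ?thesis by simp
qed

section \<open>Drift of the potential\<close>

context elitist_dlb
begin

definition block_drift :: "nat \<Rightarrow> nat \<Rightarrow> bb_state \<Rightarrow> real" where
  "block_drift M j s =
     (\<integral>s'. block_potential n M j (bb_point s') \<partial>step s) - block_potential n M j (bb_point s)"

lemma block_drift_finished: "block_drift M j (h, x, True) = 0"
  by (simp add: block_drift_def bb_step_finished)

lemma block_drift_running:
  assumes x: "length x = n"
  shows "block_drift M j (h, x, False) = (\<integral>q. pmf (accept_pmf Tie n h x q) True *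
    (block_potential n M j q - block_potential n M j x) \<partial>Op h x)"
proof -
  let ?I = "block_potential n M j" and ?\<rho> = "\<lambda>q. pmf (accept_pmf Tie n h x q) True"
  have bound: "\<bar>?I (bb_point s)\<bar> \<le> 2" for s
    using block_potential_nonneg block_potential_le_2 by (simp add: abs_le_iff)
  have "(\<integral>s'. ?I (bb_point s') \<partial>step (h, x, False)) =
      (\<integral>q. \<integral>k. ?I (if k then q else x) \<partial>accept_pmf Tie n h x q \<partial>Op h x)"
    unfolding bb_step_running by (subst integral_bind_pmf_bounded[OF bound]) (simp add: next_state_def)
  also have "\<dots> = (\<integral>q. ?\<rho> q * (?I q - ?I x) + ?I x \<partial>Op h x)"
    by (simp add: integral_bool_pmf algebra_simps)
  also have "\<dots> = (\<integral>q. ?\<rho> q * (?I q - ?I x) \<partial>Op h x) + ?I x"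
    by (simp add: integrable_measure_pmf_finite finite_set_pmf_Op[OF x])
  finally show ?thesis by (simp add: block_drift_def)
qed

lemma block_drift_below_crit_block:
  assumes x: "length x = n" and j: "j < crit_block n x"
  shows "block_drift M j (h, x, False) = 0"
proof -
  have zero: "pmf (accept_pmf Tie n h x q) True * (block_potential n M j q - block_potential n M j x) = 0"
    for q
  proof (cases "True \<in> set_pmf (accept_pmf Tie n h x q)")
    case True
    then have "crit_block n x \<le> crit_block n q"
      using accept_pmf_True crit_block_mono_dlb[OF even_n] by blast
    then show ?thesis using j by (simp add: block_potential_def)
  qed (simp add: set_pmf_eq)
  show ?thesis unfolding block_drift_running[OF x] zero by simp
qed

lemma accept_gain_crit_block:
  assumes x: "crit_block n x = c" "c < n div 2" and M: "M \<le> c"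
  shows "pmf (accept_pmf Tie n h x q) True * (block_potential n M c q - block_potential n M c x) =
    - block_potential n M c x * indicator {q. c < crit_block n q} q
    + (if block_trap x c then 0 else 1) * indicator {q. crit_block n q = c \<and> block_trap q c} q"
proof -
  consider "c < crit_block n q" | "crit_block n q < c" | "crit_block n q = c" by linarith
  then show ?thesis
  proof cases
    case 1
    then have "dlb n x < dlb n q" using dlb_less_if_crit_block_less[OF even_n] x by simp
    then show ?thesis using 1 by (simp add: accept_pmf_def block_potential_def)
  next
    case 2
    then have "dlb n q < dlb n x" using dlb_less_if_crit_block_less[OF even_n] x by simp
    then show ?thesis using 2 by (simp add: accept_pmf_def)
  next
    case 3
    consider "dlb n x < dlb n q" | "dlb n q < dlb n x" | "dlb n q = dlb n x" by linarith
    then show ?thesis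
    proof cases
      case 1
      have "\<not> block_trap x c" "block_trap q c" using dlb_less_same_crit_block(2,3)[OF x(1) 3 1] by auto
      then show ?thesis using 1 3 x M by (simp add: accept_pmf_def block_potential_def)
    next
      case 2
      have "\<not> block_trap q c" using dlb_less_same_crit_block(2)[OF 3 x(1) 2] .
      then show ?thesis using 2 3 by (simp add: accept_pmf_def)
    next
      case eq: 3
      have "block_trap q c = block_trap x c" using block_trap_eq_if_dlb_eq[OF 3 x eq] .
      then show ?thesis using 3 eq x by (auto simp: block_potential_def)
    qed
  qed
qed

lemma block_drift_crit_block_ge:
  assumes s: "valid_state n (h, x, False)" and M: "1 \<le> M"
  shows "- 2 / real M ^ 2 \<le> block_drift M (crit_block n x) (h, x, False)"
proof (cases "crit_block n x < M")
  case True
  then have "block_drift M (crit_block n x) (h, x, False) = 0"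
    using s by (simp add: block_drift_running block_potential_def)
  then show ?thesis by simp
next
  case False
  let ?c = "crit_block n x" and ?V = "Op h x"
  let ?leave = "{q. ?c < crit_block n q}" and ?trap = "{q. crit_block n q = ?c \<and> block_trap q ?c}"
  have x: "length x = n" "x \<in> bitstrings n" "?c < n div 2"
    using s crit_block_less_half by (auto simp: bitstrings_def)
  have "block_drift M ?c (h, x, False) = (\<integral>q. - block_potential n M ?c x * indicator ?leave q
      + (if block_trap x ?c then 0 else 1) * indicator ?trap q \<partial>?V)"
    using False x by (simp add: block_drift_running accept_gain_crit_block)
  also have "\<dots> = - block_potential n M ?c x * measure ?V ?leave
      + (if block_trap x ?c then 0 else 1) * measure ?V ?trap"
    by (simp add: integrable_measure_pmf_finite finite_set_pmf_Op[OF x(1)])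
  finally have drift: "block_drift M ?c (h, x, False) = \<dots>" .
  show ?thesis
  proof (cases "block_trap x ?c")
    case True
    have "real M ^ 2 * measure ?V ?leave \<le> real ?c ^ 2 * measure ?V ?leave"
      using False by (intro mult_right_mono power_mono) auto
    also have "\<dots> \<le> 1" using prob_leave_trap_le[OF unbiased x(2) refl x(3) True] .
    finally have "measure ?V ?leave \<le> 1 / real M ^ 2" using M by (simp add: field_simps)
    then show ?thesis using drift True False by (simp add: block_potential_def)
  next
    case False
    then show ?thesis
      using drift \<open>\<not> ?c < M\<close> prob_leave_mixed_block_eq_prob_trap[OF unbiased x(2) refl x(3)]
      by (simp add: block_potential_def)
  qed
qed

lemma sum_block_drift_flip_state_nonneg:
  assumes x: "length x = n" and j: "crit_block n x < j" "j < n div 2"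
  shows "0 \<le> (\<Sum>uv\<in>UNIV. block_drift M j (flip_state n (block_mask n j uv) (h, x, False)))"
proof -
  let ?I = "block_potential n M j" and ?m = "block_mask n j" and ?\<rho> = "\<lambda>q. pmf (accept_pmf Tie n h x q) True"
  have drift: "block_drift M j (flip_state n (?m uv) (h, x, False)) =
      (\<integral>q. ?\<rho> q * (?I (xor_bits q (?m uv)) - ?I (xor_bits x (?m uv))) \<partial>Op h x)" for uv
  proof -
    have flip: "flips_beyond n (?m uv) (crit_block n x)" using j(1) by (rule flips_beyond_block_mask)
    have "x \<in> bitstrings n" "?m uv \<in> bitstrings n" using x by (auto simp: bitstrings_def)
    then have "block_drift M j (flip_state n (?m uv) (h, x, False)) = (\<integral>q.
        pmf (accept_pmf Tie n h (xor_bits x (?m uv)) (xor_bits q (?m uv))) True *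
        (?I (xor_bits q (?m uv)) - ?I (xor_bits x (?m uv))) \<partial>Op h x)"
      using x flip by (simp add: block_drift_running unbiased_xor[OF unbiased])
    also have "\<dots> = (\<integral>q. ?\<rho> q * (?I (xor_bits q (?m uv)) - ?I (xor_bits x (?m uv))) \<partial>Op h x)"
      using x flip length_offspring[OF x]
      by (intro integral_cong_AE AE_pmfI) (simp_all add: accept_pmf_xor[OF even_n])
    finally show ?thesis .
  qed
  have pointwise: "(\<Sum>uv\<in>UNIV. ?\<rho> q * (?I (xor_bits q (?m uv)) - ?I (xor_bits x (?m uv)))) =
      ?\<rho> q * ((\<Sum>uv\<in>UNIV. ?I (xor_bits q (?m uv))) - (\<Sum>uv\<in>UNIV. ?I (xor_bits x (?m uv))))" for q
    by (simp add: sum_distrib_left sum_subtractf right_diff_distrib)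
  have "(\<Sum>uv\<in>UNIV. block_drift M j (flip_state n (?m uv) (h, x, False))) =
      (\<integral>q. (\<Sum>uv\<in>UNIV. ?\<rho> q * (?I (xor_bits q (?m uv)) - ?I (xor_bits x (?m uv)))) \<partial>Op h x)"
    unfolding drift
    by (rule Bochner_Integration.integral_sum[symmetric])
       (simp add: integrable_measure_pmf_finite finite_set_pmf_Op[OF x])
  also have "\<dots> = (\<integral>q. ?\<rho> q * ((\<Sum>uv\<in>UNIV. ?I (xor_bits q (?m uv))) -
      (\<Sum>uv\<in>UNIV. ?I (xor_bits x (?m uv)))) \<partial>Op h x)"
    by (simp only: pointwise)
  also have "0 \<le> \<dots>"
    using x j sum_block_potential_xor_block_mask_ge[of _ n j M] length_offspring[OF x]
    by (intro integral_nonneg_AE AE_pmfI mult_nonneg_nonneg)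
       (simp_all add: sum_block_potential_xor_block_mask_eq)
  finally show ?thesis .
qed

lemma flip_state_block_mask_eq_self:
  assumes "length x = n" "j \<le> crit_block n x" "2*j+1 < n"
  shows "flip_state n (block_mask n j uv) (h, x, d) = (h, x, d)"
proof (cases "uv = (False, False)")
  case True
  then show ?thesis using assms(1) by (simp add: block_mask_False_False xor_bits_replicate_False)
next
  case False
  then show ?thesis using not_flips_beyond_block_mask[OF assms(2,3)] by simp
qed

definition block_drift_bound :: "nat \<Rightarrow> nat \<Rightarrow> bb_state \<Rightarrow> real" where
  "block_drift_bound M j s = (if \<not> bb_done s \<and> crit_block n (bb_point s) = j then - 2 / real M ^ 2 else 0)"

lemma sum_block_drift_flip_state_ge:
  assumes s: "valid_state n s" and M: "1 \<le> M" and j: "j < n div 2"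
  shows "4 * block_drift_bound M j s \<le> (\<Sum>uv\<in>UNIV. block_drift M j (flip_state n (block_mask n j uv) s))"
proof -
  obtain h x d where s_eq: "s = (h, x, d)" by (cases s)
  have x: "length x = n" and j1: "2*j+1 < n" using s s_eq j by auto
  show ?thesis
  proof (cases "d \<or> j \<le> crit_block n x")
    case True
    have "j \<le> crit_block n x"
      using True s s_eq j crit_block_eq_half_iff[OF even_n x] by auto
    then have "(\<Sum>uv\<in>UNIV. block_drift M j (flip_state n (block_mask n j uv) s)) = 4 * block_drift M j s"
      using s_eq flip_state_block_mask_eq_self[OF x _ j1] by simp
    moreover have "block_drift_bound M j s \<le> block_drift M j s"
      using s s_eq M \<open>j \<le> crit_block n x\<close> block_drift_crit_block_ge block_drift_below_crit_block[OF x]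
      by (cases d) (auto simp: block_drift_finished block_drift_bound_def)
    ultimately show ?thesis by simp
  next
    case False
    then show ?thesis
      using s_eq x j sum_block_drift_flip_state_nonneg[of x j M h] by (simp add: block_drift_bound_def)
  qed
qed

lemma expected_block_drift_ge:
  assumes M: "1 \<le> M" and j: "j < n div 2"
  shows "(\<integral>s. block_drift_bound M j s \<partial>run t) \<le> (\<integral>s. block_drift M j s \<partial>run t)"
proof -
  have "4 * (\<integral>s. block_drift_bound M j s \<partial>run t) = (\<integral>s. 4 * block_drift_bound M j s \<partial>run t)" by simp
  also have "\<dots> \<le> (\<integral>s. (\<Sum>uv\<in>UNIV. block_drift M j (flip_state n (block_mask n j uv) s)) \<partial>run t)"
    by (intro integral_mono_AE integrable_run AE_pmfI sum_block_drift_flip_state_ge[OF valid_run M j])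
  also have "\<dots> = (\<Sum>uv\<in>UNIV. \<integral>s. block_drift M j (flip_state n (block_mask n j uv) s) \<partial>run t)"
    by (rule Bochner_Integration.integral_sum) (rule integrable_run)
  also have "\<dots> = 4 * (\<integral>s. block_drift M j s \<partial>run t)"
    by (simp add: integral_map_pmf_invariant[OF map_pmf_flip_state_run])
  finally show ?thesis by simp
qed

definition expected_potential :: "nat \<Rightarrow> nat \<Rightarrow> real" where
  "expected_potential M t = (\<integral>s. potential n M (bb_point s) \<partial>run t)"

definition prob_running :: "nat \<Rightarrow> real" where
  "prob_running t = measure (run t) {s. \<not> bb_done s}"

lemma integral_potential_step:
  assumes "valid_state n s"
  shows "(\<integral>s'. potential n M (bb_point s') \<partial>step s) =
    potential n M (bb_point s) + (\<Sum>j<n div 2. block_drift M j s)"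
proof -
  have "(\<integral>s'. potential n M (bb_point s') \<partial>step s) =
      (\<Sum>j<n div 2. \<integral>s'. block_potential n M j (bb_point s') \<partial>step s)"
    unfolding potential_def
    by (rule Bochner_Integration.integral_sum)
       (rule integrable_measure_pmf_finite[OF finite_set_pmf_step[OF assms]])
  then show ?thesis by (simp add: block_drift_def potential_def sum_subtractf)
qed

lemma expected_potential_Suc_ge:
  assumes M: "1 \<le> M"
  shows "expected_potential M t - 2 / real M ^ 2 * prob_running t \<le> expected_potential M (Suc t)"
proof -
  have "expected_potential M (Suc t) = (\<integral>s. \<integral>s'. potential n M (bb_point s') \<partial>step s \<partial>run t)"
    unfolding expected_potential_def bb_state.simps by (rule integral_bind_pmf_bounded[OF abs_potential_le])
  also have "\<dots> = (\<integral>s. potential n M (bb_point s) + (\<Sum>j<n div 2. block_drift M j s) \<partial>run t)"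
    using valid_run by (intro integral_cong_AE AE_pmfI integral_potential_step) auto
  also have "\<dots> = expected_potential M t + (\<Sum>j<n div 2. \<integral>s. block_drift M j s \<partial>run t)"
    by (simp add: expected_potential_def integrable_run)
  finally have Suc_eq: "expected_potential M (Suc t) = \<dots>" .
  have "- 2 / real M ^ 2 * prob_running t =
      (\<integral>s. - 2 / real M ^ 2 * indicator {s. \<not> bb_done s} s \<partial>run t)"
    by (simp add: prob_running_def)
  also have "\<dots> \<le> (\<integral>s. (\<Sum>j<n div 2. block_drift_bound M j s) \<partial>run t)"
  proof (intro integral_mono_AE integrable_run AE_pmfI)
    fix s
    have "(\<Sum>j<n div 2. block_drift_bound M j s) =
        (if \<not> bb_done s \<and> crit_block n (bb_point s) < n div 2 then - 2 / real M ^ 2 else 0)"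
      by (cases "bb_done s") (simp_all add: block_drift_bound_def sum.delta')
    then show "- 2 / real M ^ 2 * indicator {s. \<not> bb_done s} s \<le> (\<Sum>j<n div 2. block_drift_bound M j s)"
      by simp
  qed
  also have "\<dots> = (\<Sum>j<n div 2. \<integral>s. block_drift_bound M j s \<partial>run t)"
    by (rule Bochner_Integration.integral_sum) (rule integrable_run)
  also have "\<dots> \<le> (\<Sum>j<n div 2. \<integral>s. block_drift M j s \<partial>run t)"
    by (intro sum_mono expected_block_drift_ge[OF M]) simp
  finally show ?thesis using Suc_eq by simp
qed

lemma expected_potential_le: "expected_potential M t \<le> 2 * real (n div 2) * prob_running t"
proof -
  have "expected_potential M t \<le> (\<integral>s. 2 * real (n div 2) * indicator {s. \<not> bb_done s} s \<partial>run t)"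
    unfolding expected_potential_def
  proof (intro integral_mono_AE integrable_run AE_pmfI)
    fix s assume "s \<in> set_pmf (run t)"
    then have s: "valid_state n s" by (rule valid_run)
    show "potential n M (bb_point s) \<le> 2 * real (n div 2) * indicator {s. \<not> bb_done s} s"
    proof (cases "bb_done s")
      case True
      then have "crit_block n (bb_point s) = n div 2"
        using s crit_block_eq_half_iff[OF even_n] by (cases s) auto
      then have "potential n M (bb_point s) = 0" by (simp add: potential_def block_potential_def)
      then show ?thesis by simp
    next
      case False
      then show ?thesis using abs_potential_le[of n M "bb_point s"] by simp
    qed
  qed
  then show ?thesis by (simp add: prob_running_def)
qed

lemma prob_running_Suc_le: "prob_running (Suc t) \<le> prob_running t"
proof -
  let ?A = "{s. \<not> bb_done s}"
  have "prob_running (Suc t) = (\<integral>s. \<integral>s'. indicator ?A s' \<partial>step s \<partial>run t)"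
    unfolding prob_running_def bb_state.simps
    by (subst integral_bind_pmf_bounded[where B=1, symmetric]) simp_all
  also have "\<dots> \<le> (\<integral>s. indicator ?A s \<partial>run t)"
  proof (intro integral_mono_AE integrable_run AE_pmfI)
    fix s :: bb_state
    show "(\<integral>s'. indicator ?A s' \<partial>step s) \<le> (indicator ?A s :: real)"
    proof (cases "bb_done s")
      case True
      then obtain h x where s: "s = (h, x, True)" by (cases s) auto
      show ?thesis by (simp add: s bb_step_finished)
    next
      case False
      then show ?thesis using measure_pmf.prob_le_1[of "step s" ?A] by simp
    qed
  qed
  also have "\<dots> = prob_running t" by (simp add: prob_running_def)
  finally show ?thesis .
qed

lemma expected_potential_init:
  assumes "M \<le> n div 2"
  shows "3/4 * (real (n div 2) - real M) \<le> expected_potential M 0"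
proof -
  let ?U = "pmf_of_set (bitstrings n)" and ?bad = "\<lambda>j x. if \<not> block_ok x j then 1 else 0 :: real"
  have int: "integrable ?U (f :: bool list \<Rightarrow> real)" for f
    by (simp add: integrable_measure_pmf_finite bitstrings_nonempty finite_bitstrings)
  have "3/4 * (real (n div 2) - real M) = (\<Sum>j\<in>{M..<n div 2}. \<integral>x. ?bad j x \<partial>?U)"
    using assms by (simp add: integral_not_block_ok_uniform of_nat_diff)
  also have "\<dots> = (\<integral>x. (\<Sum>j\<in>{M..<n div 2}. ?bad j x) \<partial>?U)"
    by (rule Bochner_Integration.integral_sum[symmetric]) (rule int)
  also have "\<dots> \<le> (\<integral>x. potential n M x \<partial>?U)"
  proof (intro integral_mono_AE int AE_pmfI)
    fix x
    have "(\<Sum>j\<in>{M..<n div 2}. ?bad j x) = (\<Sum>j<n div 2. if M \<le> j \<and> \<not> block_ok x j then 1 else 0)"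
      by (rule sum.mono_neutral_cong_left) auto
    also have "\<dots> \<le> potential n M x" unfolding potential_def by (intro sum_mono block_potential_ge) simp
    finally show "(\<Sum>j\<in>{M..<n div 2}. ?bad j x) \<le> potential n M x" .
  qed
  also have "\<dots> = expected_potential M 0" by (simp add: expected_potential_def bb_init_def)
  finally show ?thesis .
qed

lemma sum_prob_running_ge:
  assumes M: "1 \<le> M" "M \<le> n div 2"
  shows "3/16 * real M ^ 2 * (real (n div 2) - real M) \<le> (\<Sum>t<n div 2 * M^2. prob_running t)"
proof -
  define T where "T = n div 2 * M^2"
  define S where "S = (\<Sum>t<T. prob_running t)"
  have "expected_potential M 0 - 2 / real M ^ 2 * S \<le> expected_potential M T"
    unfolding S_def
  proof (induction T)
    case (Suc T)
    then show ?case using expected_potential_Suc_ge[OF M(1), of T] by (simp add: algebra_simps)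
  qed simp
  then have "real M ^ 2 * expected_potential M 0 - 2 * S \<le> real M ^ 2 * expected_potential M T"
    using M(1) by (simp add: field_simps)
  also have "\<dots> \<le> real M ^ 2 * (2 * real (n div 2) * prob_running T)"
    using expected_potential_le by (intro mult_left_mono) simp_all
  also have "\<dots> = 2 * (\<Sum>t<T. prob_running T)" by (simp add: T_def)
  also have "\<dots> \<le> 2 * S"
  proof -
    have "prob_running T \<le> prob_running t" if "t \<le> T" for t
      using that by (induction T) (auto intro: order_trans[OF prob_running_Suc_le] simp: le_Suc_eq)
    then show ?thesis unfolding S_def by (intro mult_left_mono sum_mono) simp_all
  qed
  finally have "real M ^ 2 * expected_potential M 0 \<le> 4 * S" by simp
  moreover have "real M ^ 2 * (3/4 * (real (n div 2) - real M)) \<le> real M ^ 2 * expected_potential M 0"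
    using expected_potential_init[OF M(2)] by (intro mult_left_mono) simp_all
  ultimately have "real M ^ 2 * (3/4 * (real (n div 2) - real M)) \<le> 4 * S" by linarith
  then show ?thesis unfolding S_def T_def by (simp add: algebra_simps)
qed

lemma sum_prob_running_le_expected_runtime:
  "ennreal (\<Sum>t<T. prob_running t) \<le> expected_runtime n (dlb n) Op Tie"
proof -
  have "ennreal (\<Sum>t<T. prob_running t) = (\<Sum>t<T. ennreal (prob_running t))"
    by (simp add: prob_running_def)
  also have "\<dots> \<le> (\<Sum>t. ennreal (prob_running t))" by (rule sum_le_suminf) (auto intro: summableI)
  also have "\<dots> \<le> expected_runtime n (dlb n) Op Tie" by (simp add: expected_runtime_def prob_running_def)
  finally show ?thesis .
qed

end

theorem theorem9:
  shows "\<exists>c::real > 0. \<exists>N::nat. \<forall>n \<ge> N. even n \<longrightarrow>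
    (\<forall>(Op :: real list \<Rightarrow> bool list \<Rightarrow> bool list pmf) (Tie :: real list \<Rightarrow> bool pmf).
       (\<forall>h. unary_unbiased n (Op h)) \<longrightarrow>
       ennreal (c * real n ^ 3) \<le> expected_runtime n (dlb n) Op Tie)"
proof (intro exI[of _ "1/4096"] conjI exI[of _ 4] allI impI)
  fix n :: nat and Op :: "real list \<Rightarrow> bool list \<Rightarrow> bool list pmf" and Tie :: "real list \<Rightarrow> bool pmf"
  assume "4 \<le> n" "even n" "\<forall>h. unary_unbiased n (Op h)"
  then interpret elitist_dlb n Op Tie by unfold_locales auto
  define M where "M = n div 4"
  have M: "1 \<le> M" "M \<le> n div 2" using \<open>4 \<le> n\<close> by (auto simp: M_def)
  have "n \<le> 8 * M" "2 * M \<le> n div 2" using \<open>4 \<le> n\<close> unfolding M_def by presburger+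
  then have n: "real n \<le> 8 * real M" and half: "real M \<le> real (n div 2) - real M" by simp_all
  have "1/4096 * real n ^ 3 \<le> 1/4096 * (8 * real M) ^ 3" using n by (intro mult_left_mono power_mono) auto
  also have "\<dots> = 1/8 * real M ^ 2 * real M" by (simp add: power3_eq_cube power2_eq_square)
  also have "\<dots> \<le> 3/16 * real M ^ 2 * (real (n div 2) - real M)" using half by (intro mult_mono) auto
  also have "\<dots> \<le> (\<Sum>t<n div 2 * M^2. prob_running t)" by (rule sum_prob_running_ge[OF M])
  finally show "ennreal (1/4096 * real n ^ 3) \<le> expected_runtime n (dlb n) Op Tie"
    by (intro order_trans[OF ennreal_leI sum_prob_running_le_expected_runtime])
qed simp

end
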